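(* Let $n\ge1$, $\alpha\in\{1,2,\dots,n\}$, and for integers $l_1>\dots>l_n\ge0$ let $$c_{\mathbf l}(\lambda)=(-1)^{n(n-1)/2}\prod_{k=1}^n\Gamma(2\lambda+2k-1)\cdot\frac{(-1)^{\sum_j l_j}\prod_{1\le a<b\le n}(l_a^2-l_b^2)}{\prod_{j=1}^n\Gamma(-l_j+\lambda+n)\,\Gamma(l_j+\lambda+n)},$$ a meromorphic function of $\lambda$. Then each $c_{\mathbf l}$ is holomorphic at $\lambda=-n+\alpha$; moreover $c_{\mathbf l}(-n+\alpha)\neq0$ if and only if $(l_{n-\alpha+1},\dots,l_{n-1},l_n)=(\alpha-1,\dots,1,0)$, and all nonzero values $c_{\mathbf l}(-n+\alpha)$ have the same sign. Consequently, at $\lambda=-n+\alpha$ the invariant Hermitian form on $C^\infty({\rm SO}(2n))$ with these Fourier coefficients is semidefinite.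
   Context: Here $c_{\mathbf l}(\lambda)$ is, for $\operatorname{Re}\lambda>-1/2$, the Fourier coefficient of $\ell_\lambda(g)=\prod_j|\sin(\varphi_j/2)|^{2\lambda}$ on ${\rm SO}(2n)$ (eigenvalues $e^{\pm i\varphi_j}$) against an irreducible character of highest weight $\mu$, with $l_j=\mu_j+n-j$ ($j<n$), $l_n=|\mu_n|$; $1/\Gamma$ is entire. *)

theory Defs
  imports "HOL-Analysis.Analysis"
begin

text \<open>Admissible index tuples: integers l_1 > ... > l_n >= 0, encoded as l :: nat => nat
  on the indices 1..n (values outside 1..n are irrelevant).\<close>
definition admissible :: "nat \<Rightarrow> (nat \<Rightarrow> nat) \<Rightarrow> bool" where
  "admissible n l \<longleftrightarrow> (\<forall>a b. 1 \<le> a \<longrightarrow> a < b \<longrightarrow> b \<le> n \<longrightarrow> l b < l a)"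

text \<open>The meromorphic function c_l(lambda), written literally with the Gamma function.
  (Isabelle's Gamma is 0 at its poles; only values off the poles are ever used below.)\<close>
definition coeff_c :: "nat \<Rightarrow> (nat \<Rightarrow> nat) \<Rightarrow> complex \<Rightarrow> complex" where
  "coeff_c n l w =
     (-1) ^ (n * (n - 1) div 2) * (\<Prod>k=1..n. Gamma (2 * w + 2 * of_nat k - 1)) *
     ((-1) ^ (\<Sum>j=1..n. l j) *
      (\<Prod>(a, b)\<in>{(a, b). 1 \<le> a \<and> a < b \<and> b \<le> n}.
          of_int (int (l a) ^ 2 - int (l b) ^ 2))
      / (\<Prod>j=1..n. Gamma (- of_nat (l j) + w + of_nat n) * Gamma (of_nat (l j) + w + of_nat n)))"

definition holomorphic_at_removable :: "(complex \<Rightarrow> complex) \<Rightarrow> complex \<Rightarrow> bool" where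
  "holomorphic_at_removable f z0 \<longleftrightarrow>
     (\<exists>r>0. \<exists>g. g holomorphic_on ball z0 r \<and> (\<forall>z\<in>ball z0 r - {z0}. g z = f z))"

definition value_at :: "(complex \<Rightarrow> complex) \<Rightarrow> complex \<Rightarrow> complex" where
  "value_at f z0 = Lim (at z0) f"

end

(*
  At lambda0 = -q with q = n - alpha, each Gamma factor of c_l is either regular and positive
  or has a simple pole, and at -m the leading Laurent coefficient of Gamma has sign (-1)^m.
  The numerator prod_k Gamma(2 lambda + 2k - 1) has exactly q poles (k <= q), while
  1/Gamma(lambda + n - l_j) vanishes exactly when l_j >= alpha.  Since l_j >= n - j, the latter
  happens at least for all j <= q, so c_l has a zero of order #{j. l_j >= alpha} - q >= 0
  at -q, and the order is 0 iff l_j = n - j for all j > q.  In that case the sign of c_l(-q)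
  is (-1)^(n(n-1)/2 + sum_j l_j + q + sum_{j<=q} (l_j - alpha)); the tail of l is fixed and
  sum_{j<=q} (2 l_j - alpha) = q alpha (mod 2), so this sign does not depend on l.
*)
theory Submission
  imports Defs
begin

definition order_sign_at :: "(complex \<Rightarrow> complex) \<Rightarrow> complex \<Rightarrow> int \<Rightarrow> nat \<Rightarrow> bool" where
  "order_sign_at f z0 d e \<longleftrightarrow>
     (\<exists>r>0. \<exists>h p. p > 0 \<and> h holomorphic_on ball z0 r \<and> h z0 = complex_of_real ((-1)^e * p) \<and>
        (\<forall>w\<in>ball z0 r - {z0}. f w = (w - z0) powi d * h w))"

lemma order_sign_atI:
  assumes "r > 0" "p > 0" "h holomorphic_on ball z0 r" "h z0 = complex_of_real ((-1)^e * p)"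
    and "\<And>w. w \<in> ball z0 r - {z0} \<Longrightarrow> f w = (w - z0) powi d * h w"
  shows "order_sign_at f z0 d e"
  unfolding order_sign_at_def using assms by blast

lemma order_sign_atE:
  assumes "order_sign_at f z0 d e"
  obtains r p h where "r > 0" "p > 0" "h holomorphic_on ball z0 r"
    "h z0 = complex_of_real ((-1)^e * p)" "\<And>w. w \<in> ball z0 r - {z0} \<Longrightarrow> f w = (w - z0) powi d * h w"
  using assms unfolding order_sign_at_def by blast

lemma order_sign_at_holomorphic:
  assumes "r > 0" "f holomorphic_on ball z0 r" "f z0 = complex_of_real ((-1)^e * p)" "p > 0"
  shows "order_sign_at f z0 0 e"
  using assms by (intro order_sign_atI[of r p f]) auto

lemma order_sign_at_parity:
  assumes "order_sign_at f z0 d e" "even e \<longleftrightarrow> even e'"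
  shows "order_sign_at f z0 d e'"
proof -
  have "(-1::real) ^ e = (-1) ^ e'"
    using assms(2) by (simp add: minus_one_power_iff)
  then show ?thesis
    using assms(1) unfolding order_sign_at_def by metis
qed

lemma order_sign_at_mult:
  assumes "order_sign_at f z0 d1 e1" "order_sign_at g z0 d2 e2"
  shows "order_sign_at (\<lambda>w. f w * g w) z0 (d1 + d2) (e1 + e2)"
proof -
  obtain r1 p1 h1 where 1: "r1 > 0" "p1 > 0" "h1 holomorphic_on ball z0 r1"
    "h1 z0 = complex_of_real ((-1)^e1 * p1)" "\<And>w. w \<in> ball z0 r1 - {z0} \<Longrightarrow> f w = (w - z0) powi d1 * h1 w"
    by (rule order_sign_atE[OF assms(1)]) blast
  obtain r2 p2 h2 where 2: "r2 > 0" "p2 > 0" "h2 holomorphic_on ball z0 r2"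
    "h2 z0 = complex_of_real ((-1)^e2 * p2)" "\<And>w. w \<in> ball z0 r2 - {z0} \<Longrightarrow> g w = (w - z0) powi d2 * h2 w"
    by (rule order_sign_atE[OF assms(2)]) blast
  show ?thesis
  proof (rule order_sign_atI[of "min r1 r2" "p1 * p2" "\<lambda>w. h1 w * h2 w"])
    show "(\<lambda>w. h1 w * h2 w) holomorphic_on ball z0 (min r1 r2)"
      by (intro holomorphic_on_mult holomorphic_on_subset[OF 1(3)] holomorphic_on_subset[OF 2(3)]) auto
    show "h1 z0 * h2 z0 = complex_of_real ((-1)^(e1 + e2) * (p1 * p2))"
      using 1(4) 2(4) by (simp add: power_add)
    fix w assume "w \<in> ball z0 (min r1 r2) - {z0}"
    then show "f w * g w = (w - z0) powi (d1 + d2) * (h1 w * h2 w)"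
      using 1(5) 2(5) by (simp add: power_int_add)
  qed (use 1 2 in auto)
qed

lemma order_sign_at_prod:
  assumes "finite A" "\<And>i. i \<in> A \<Longrightarrow> order_sign_at (f i) z0 (d i) (e i)"
  shows "order_sign_at (\<lambda>w. \<Prod>i\<in>A. f i w) z0 (\<Sum>i\<in>A. d i) (\<Sum>i\<in>A. e i)"
  using assms
proof (induction A rule: finite_induct)
  case empty
  show ?case
    by (simp add: order_sign_at_holomorphic[of 1 "\<lambda>_. 1" _ 0 1])
next
  case (insert x F)
  then show ?case
    using order_sign_at_mult[of "f x" z0 "d x" "e x"] by simp
qed

lemma order_sign_at_inverse:
  assumes "order_sign_at f z0 d e"
  shows "order_sign_at (\<lambda>w. inverse (f w)) z0 (- d) e"
proof -
  obtain r p h where h: "r > 0" "p > 0" "h holomorphic_on ball z0 r"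
    "h z0 = complex_of_real ((-1)^e * p)" "\<And>w. w \<in> ball z0 r - {z0} \<Longrightarrow> f w = (w - z0) powi d * h w"
    by (rule order_sign_atE[OF assms]) blast
  have "isCont h z0"
    using h(1,3) by (meson centre_in_ball holomorphic_on_imp_continuous_on open_ball continuous_on_eq_continuous_at)
  moreover have "h z0 \<noteq> 0"
    using h(2,4) by simp
  ultimately obtain r' where r': "r' > 0" "\<And>w. dist z0 w < r' \<Longrightarrow> h w \<noteq> 0"
    using continuous_at_avoid by blast
  define s where "s = min r r'"
  show ?thesis
  proof (rule order_sign_atI[of s "1 / p" "\<lambda>w. inverse (h w)"])
    show "(\<lambda>w. inverse (h w)) holomorphic_on ball z0 s"
      using r' by (intro holomorphic_intros holomorphic_on_subset[OF h(3)]) (auto simp: s_def)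
    show "inverse (h z0) = complex_of_real ((-1)^e * (1 / p))"
      using h(4) by (simp add: divide_inverse flip: power_inverse)
    fix w assume "w \<in> ball z0 s - {z0}"
    then show "inverse (f w) = (w - z0) powi (- d) * inverse (h w)"
      using h(5) by (simp add: s_def power_int_minus inverse_mult_distrib)
  qed (use h r' in \<open>auto simp: s_def\<close>)
qed

lemma order_sign_at_affine:
  assumes "order_sign_at f a d e" "c > 0"
  shows "order_sign_at (\<lambda>w. f (of_real c * (w - z0) + a)) z0 d e"
proof -
  obtain r p h where h: "r > 0" "p > 0" "h holomorphic_on ball a r"
    "h a = complex_of_real ((-1)^e * p)" "\<And>u. u \<in> ball a r - {a} \<Longrightarrow> f u = (u - a) powi d * h u"
    by (rule order_sign_atE[OF assms(1)]) blast
  have maps: "of_real c * (w - z0) + a \<in> ball a r" if "w \<in> ball z0 (r / c)" for w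
    using that assms(2) by (simp add: dist_norm norm_mult norm_minus_commute pos_less_divide_eq mult.commute)
  show ?thesis
  proof (rule order_sign_atI[of "r / c" "c powi d * p" "\<lambda>w. of_real c powi d * h (of_real c * (w - z0) + a)"])
    show "(\<lambda>w. of_real c powi d * h (of_real c * (w - z0) + a)) holomorphic_on ball z0 (r / c)"
      using maps by (intro holomorphic_intros holomorphic_on_compose_gen[OF _ h(3), unfolded o_def]) auto
    fix w assume w: "w \<in> ball z0 (r / c) - {z0}"
    then have "of_real c * (w - z0) + a \<in> ball a r - {a}"
      using maps assms(2) by auto
    then show "f (of_real c * (w - z0) + a) = (w - z0) powi d * (of_real c powi d * h (of_real c * (w - z0) + a))"
      using h(5) by (simp add: power_int_mult_distrib)
  qed (use h assms(2) in auto)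
qed

lemma order_sign_at_rGamma_nonpos_Int: "order_sign_at rGamma (- of_nat m) 1 m"
proof (rule order_sign_atI[of 1 "fact m" "\<lambda>w. pochhammer w m * rGamma (w + of_nat (Suc m))"])
  show "pochhammer (- of_nat m) m * rGamma (- of_nat m + of_nat (Suc m)) = complex_of_real ((-1)^m * fact m)"
    by (simp add: pochhammer_minus flip: pochhammer_fact)
  fix w :: complex
  show "rGamma w = (w - - of_nat m) powi 1 * (pochhammer w m * rGamma (w + of_nat (Suc m)))"
    using pochhammer_rGamma[of w "Suc m"] by (simp add: pochhammer_Suc algebra_simps)
qed (auto simp: pochhammer_prod intro!: holomorphic_intros holomorphic_on_prod)

lemma order_sign_at_Gamma_nonpos_Int: "order_sign_at Gamma (- of_nat m) (-1) m"
  using order_sign_at_inverse[OF order_sign_at_rGamma_nonpos_Int] by (simp add: Gamma_def [abs_def])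

lemma order_sign_at_Gamma_pos:
  assumes "x > 0"
  shows "order_sign_at Gamma (of_real x) 0 0"
proof -
  have "rGamma x > 0"
    using assms by (simp add: rGamma_inverse_Gamma)
  then have "order_sign_at rGamma (of_real x) 0 0"
    by (intro order_sign_at_holomorphic[of 1 _ _ _ "rGamma x"])
       (auto intro: holomorphic_intros simp: rGamma_complex_of_real)
  from order_sign_at_inverse[OF this] show ?thesis
    by (simp add: Gamma_def [abs_def])
qed

lemma value_at_holomorphic_extension:
  assumes "r > 0" "g holomorphic_on ball z0 r" "\<And>z. z \<in> ball z0 r - {z0} \<Longrightarrow> g z = f z"
  shows "value_at f z0 = g z0"
proof -
  have "isCont g z0"
    using assms(1,2) by (meson centre_in_ball holomorphic_on_imp_continuous_on open_ball continuous_on_eq_continuous_at)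
  then have "(g \<longlongrightarrow> g z0) (at z0)"
    by (simp add: isCont_def)
  then have "(f \<longlongrightarrow> g z0) (at z0)"
    by (rule Lim_transform_within_open[where s = "ball z0 r"]) (use assms in auto)
  then show ?thesis
    unfolding value_at_def by (simp add: tendsto_Lim)
qed

lemma order_sign_at_nonneg:
  assumes "order_sign_at f z0 d e" "d \<ge> 0"
  shows "holomorphic_at_removable f z0"
    and "value_at f z0 \<noteq> 0 \<longleftrightarrow> d = 0"
    and "d = 0 \<Longrightarrow> \<exists>p>0. value_at f z0 = complex_of_real ((-1)^e * p)"
proof -
  obtain r p h where h: "r > 0" "p > 0" "h holomorphic_on ball z0 r"
    "h z0 = complex_of_real ((-1)^e * p)" "\<And>w. w \<in> ball z0 r - {z0} \<Longrightarrow> f w = (w - z0) powi d * h w"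
    by (rule order_sign_atE[OF assms(1)]) blast
  define g where "g w = (w - z0) ^ nat d * h w" for w
  have g_holo: "g holomorphic_on ball z0 r"
    unfolding g_def by (intro holomorphic_intros h(3))
  have g_eq: "g w = f w" if "w \<in> ball z0 r - {z0}" for w
    using h(5)[OF that] assms(2) by (simp add: g_def power_int_def)
  have value_eq: "value_at f z0 = g z0"
    using value_at_holomorphic_extension[OF h(1) g_holo g_eq] .
  show "holomorphic_at_removable f z0"
    unfolding holomorphic_at_removable_def using h(1) g_holo g_eq by blast
  show "value_at f z0 \<noteq> 0 \<longleftrightarrow> d = 0"
    using h(2,4) assms(2) by (simp add: value_eq g_def)
  show "\<exists>p>0. value_at f z0 = complex_of_real ((-1)^e * p)" if "d = 0"
    using h(2,4) that by (auto simp: value_eq g_def)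
qed

lemma admissible_diff_le:
  assumes "admissible n l" "1 \<le> a" "a \<le> b" "b \<le> n"
  shows "l b + (b - a) \<le> l a"
  using assms(3)
proof (induction b rule: dec_induct)
  case (step b)
  have "l (Suc b) < l b"
    using assms(1,2,4) step(1,2) unfolding admissible_def by auto
  with step show ?case
    by (simp add: Suc_diff_le)
qed simp

lemma admissible_lower_bound: "admissible n l \<Longrightarrow> j \<in> {1..n} \<Longrightarrow> n - j \<le> l j"
  using admissible_diff_le[of n l j n] by auto

lemma admissible_initial_segment_large:
  assumes "admissible n l" "n = q + \<alpha>"
  shows "{1..q} \<subseteq> {j\<in>{1..n}. \<alpha> \<le> l j}"
proof
  fix j assume j: "j \<in> {1..q}"
  then have "j \<in> {1..n}"
    using assms(2) by auto
  with admissible_lower_bound[OF assms(1)] have "n - j \<le> l j" .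
  with j assms(2) show "j \<in> {j\<in>{1..n}. \<alpha> \<le> l j}"
    by auto
qed

lemma admissible_large_eq_initial_iff:
  assumes adm: "admissible n l" and n: "n = q + \<alpha>" and "1 \<le> \<alpha>"
  shows "{j\<in>{1..n}. \<alpha> \<le> l j} = {1..q} \<longleftrightarrow> (\<forall>j\<in>{q+1..n}. l j = n - j)"
proof
  assume large: "{j\<in>{1..n}. \<alpha> \<le> l j} = {1..q}"
  show "\<forall>j\<in>{q+1..n}. l j = n - j"
  proof
    fix j assume j: "j \<in> {q+1..n}"
    have "q + 1 \<notin> {j\<in>{1..n}. \<alpha> \<le> l j}"
      unfolding large by simp
    then have "l (q + 1) < \<alpha>"
      using n \<open>1 \<le> \<alpha>\<close> by auto
    moreover have "l j + (j - (q + 1)) \<le> l (q + 1)"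
      using admissible_diff_le[OF adm, of "q + 1" j] j by auto
    moreover have "n - j \<le> l j"
      using admissible_lower_bound[OF adm, of j] j by auto
    ultimately show "l j = n - j"
      using j n by auto
  qed
next
  assume "\<forall>j\<in>{q+1..n}. l j = n - j"
  then have small: "l j < \<alpha>" if "j \<in> {q+1..n}" for j
    using that n by auto
  have "{j\<in>{1..n}. \<alpha> \<le> l j} \<subseteq> {1..q}"
  proof
    fix j assume "j \<in> {j\<in>{1..n}. \<alpha> \<le> l j}"
    with small[of j] show "j \<in> {1..q}"
      by (cases "j \<le> q") auto
  qed
  then show "{j\<in>{1..n}. \<alpha> \<le> l j} = {1..q}"
    using admissible_initial_segment_large[OF adm n] by (rule equalityI)
qed

lemma coeff_c_eq_Gamma_product:
  "coeff_c n l w =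
     complex_of_real ((-1) ^ (n * (n - 1) div 2 + (\<Sum>j=1..n. l j)) *
       real_of_int (\<Prod>(a, b)\<in>{(a, b). 1 \<le> a \<and> a < b \<and> b \<le> n}. int (l a) ^ 2 - int (l b) ^ 2)) *
     ((\<Prod>k=1..n. Gamma (2 * w + 2 * of_nat k - 1)) *
      inverse (\<Prod>j=1..n. Gamma (- of_nat (l j) + w + of_nat n) * Gamma (of_nat (l j) + w + of_nat n)))"
  unfolding coeff_c_def by (simp add: of_int_prod case_prod_unfold divide_inverse power_add mult_ac)

lemma admissible_prod_square_diff_pos:
  assumes "admissible n l"
  shows "(\<Prod>(a, b)\<in>{(a, b). 1 \<le> a \<and> a < b \<and> b \<le> n}. int (l a) ^ 2 - int (l b) ^ 2) > 0"
proof (rule prod_pos, clarify)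
  fix a b assume "1 \<le> a" "a < b" "b \<le> n"
  then have "l b < l a"
    using assms unfolding admissible_def by blast
  then show "0 < int (l a) ^ 2 - int (l b) ^ 2"
    by (simp add: power_strict_mono)
qed

lemma order_sign_at_Gamma_numerator:
  assumes "q \<le> n"
  shows "order_sign_at (\<lambda>w. \<Prod>k=1..n. Gamma (2 * w + 2 * of_nat k - 1)) (- of_nat q) (- int q) q"
proof -
  define G where "G k w = Gamma (2 * w + 2 * of_nat k - 1)" for k :: nat and w :: complex
  obtain m where n: "n = q + m"
    using assms le_Suc_ex by blast
  have pole: "order_sign_at (G k) (- of_nat q) (-1) 1" if k: "k \<in> {1..q}" for k
  proof -
    obtain i where q: "q = k + i"
      using k le_Suc_ex[of k q] by auto
    have "order_sign_at (\<lambda>w. Gamma (of_real 2 * (w - - of_nat q) + - of_nat (2 * i + 1))) (- of_nat q) (-1) (2 * i + 1)"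
      by (rule order_sign_at_affine[OF order_sign_at_Gamma_nonpos_Int]) simp
    moreover have "(\<lambda>w. Gamma (of_real 2 * (w - - of_nat q) + - of_nat (2 * i + 1))) = G k"
      by (simp add: G_def [abs_def] q algebra_simps)
    ultimately show ?thesis
      by (auto intro: order_sign_at_parity)
  qed
  have regular: "order_sign_at (G k) (- of_nat q) 0 0" if k: "k \<in> {q+1..n}" for k
  proof -
    obtain i where k: "k = q + 1 + i"
      using k le_Suc_ex[of "q + 1" k] by auto
    have "order_sign_at (\<lambda>w. Gamma (of_real 2 * (w - - of_nat q) + of_real (2 * i + 1))) (- of_nat q) 0 0"
      by (rule order_sign_at_affine[OF order_sign_at_Gamma_pos]) simp_all
    moreover have "(\<lambda>w. Gamma (of_real 2 * (w - - of_nat q) + of_real (2 * i + 1))) = G k"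
      by (simp add: G_def [abs_def] k algebra_simps)
    ultimately show ?thesis
      by simp
  qed
  have "(\<Prod>k=1..n. G k w) = (\<Prod>k=1..q. G k w) * (\<Prod>k=q+1..n. G k w)" for w
    unfolding n by (rule prod.ub_add_nat) simp
  moreover have "order_sign_at (\<lambda>w. \<Prod>k=1..q. G k w) (- of_nat q) (\<Sum>k=1..q. -1) (\<Sum>k=1..q. 1)"
    by (rule order_sign_at_prod) (use pole in simp_all)
  moreover have "order_sign_at (\<lambda>w. \<Prod>k=q+1..n. G k w) (- of_nat q) (\<Sum>k=q+1..n. 0) (\<Sum>k=q+1..n. 0)"
    by (rule order_sign_at_prod) (use regular in simp_all)
  ultimately have "order_sign_at (\<lambda>w. \<Prod>k=1..n. G k w) (- of_nat q) (- int q) q"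
    using order_sign_at_mult by fastforce
  then show ?thesis
    by (simp add: G_def)
qed

lemma order_sign_at_Gamma_denominator:
  assumes n: "n = q + \<alpha>" and "1 \<le> \<alpha>"
  shows "order_sign_at
      (\<lambda>w. \<Prod>j=1..n. Gamma (- of_nat (l j) + w + of_nat n) * Gamma (of_nat (l j) + w + of_nat n))
      (- of_nat q) (- int (card {j\<in>{1..n}. \<alpha> \<le> l j})) (\<Sum>j\<in>{j\<in>{1..n}. \<alpha> \<le> l j}. l j - \<alpha>)"
proof -
  define F where "F j w = Gamma (- of_nat (l j) + w + of_nat n) * Gamma (of_nat (l j) + w + of_nat n)"
    for j :: nat and w :: complex
  have factor: "order_sign_at (F j) (- of_nat q) (if \<alpha> \<le> l j then -1 else 0) (if \<alpha> \<le> l j then l j - \<alpha> else 0)" for j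
  proof -
    have "order_sign_at (\<lambda>w. Gamma (of_real 1 * (w - - of_nat q) + of_real (l j + \<alpha>))) (- of_nat q) 0 0"
      using \<open>1 \<le> \<alpha>\<close> by (intro order_sign_at_affine[OF order_sign_at_Gamma_pos]) simp_all
    then have upper: "order_sign_at (\<lambda>w. Gamma (of_nat (l j) + w + of_nat n)) (- of_nat q) 0 0"
      by (simp add: n algebra_simps)
    have lower: "order_sign_at (\<lambda>w. Gamma (- of_nat (l j) + w + of_nat n)) (- of_nat q)
        (if \<alpha> \<le> l j then -1 else 0) (if \<alpha> \<le> l j then l j - \<alpha> else 0)"
    proof (cases "\<alpha> \<le> l j")
      case True
      then obtain i where i: "l j = \<alpha> + i"
        using le_Suc_ex by blast
      have "order_sign_at (\<lambda>w. Gamma (of_real 1 * (w - - of_nat q) + - of_nat i)) (- of_nat q) (-1) i"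
        by (rule order_sign_at_affine[OF order_sign_at_Gamma_nonpos_Int]) simp
      then show ?thesis
        using True by (simp add: n i algebra_simps)
    next
      case False
      then obtain i where i: "\<alpha> = l j + 1 + i"
        by (metis add.commute add_Suc less_imp_Suc_add not_le plus_1_eq_Suc)
      have "order_sign_at (\<lambda>w. Gamma (of_real 1 * (w - - of_nat q) + of_real (i + 1))) (- of_nat q) 0 0"
        by (rule order_sign_at_affine[OF order_sign_at_Gamma_pos]) simp_all
      then show ?thesis
        using False by (simp add: n i algebra_simps)
    qed
    from order_sign_at_mult[OF lower upper] show ?thesis
      by (simp add: F_def [abs_def])
  qed
  have "(\<Sum>j=1..n. if \<alpha> \<le> l j then -1 else 0) = - int (card {j\<in>{1..n}. \<alpha> \<le> l j})"
    by (simp add: sum.inter_filter [symmetric])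
  moreover have "(\<Sum>j=1..n. if \<alpha> \<le> l j then l j - \<alpha> else 0) = (\<Sum>j\<in>{j\<in>{1..n}. \<alpha> \<le> l j}. l j - \<alpha>)"
    by (rule sum.inter_filter [symmetric]) simp
  ultimately show ?thesis
    using order_sign_at_prod[of "{1..n}" F, OF _ factor] by (simp add: F_def)
qed

lemma order_sign_at_coeff_c:
  assumes adm: "admissible n l" and n: "n = q + \<alpha>" and "1 \<le> \<alpha>"
  defines "J \<equiv> {j\<in>{1..n}. \<alpha> \<le> l j}"
  shows "order_sign_at (coeff_c n l) (- of_nat q)
      (int (card J) - int q) (n * (n - 1) div 2 + (\<Sum>j=1..n. l j) + q + (\<Sum>j\<in>J. l j - \<alpha>))"
proof -
  define N where "N = n * (n - 1) div 2 + (\<Sum>j=1..n. l j)"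
  define V where "V = real_of_int (\<Prod>(a, b)\<in>{(a, b). 1 \<le> a \<and> a < b \<and> b \<le> n}. int (l a) ^ 2 - int (l b) ^ 2)"
  have "V > 0"
    unfolding V_def of_int_0_less_iff by (rule admissible_prod_square_diff_pos[OF adm])
  then have const: "order_sign_at (\<lambda>_. complex_of_real ((-1) ^ N * V)) (- of_nat q) 0 N"
    by (intro order_sign_at_holomorphic[of 1 _ _ _ V]) auto
  have "coeff_c n l = (\<lambda>w. complex_of_real ((-1) ^ N * V) *
      ((\<Prod>k=1..n. Gamma (2 * w + 2 * of_nat k - 1)) *
       inverse (\<Prod>j=1..n. Gamma (- of_nat (l j) + w + of_nat n) * Gamma (of_nat (l j) + w + of_nat n))))"
    by (rule ext) (simp add: coeff_c_eq_Gamma_product N_def V_def)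
  then show ?thesis
    using order_sign_at_mult[OF const order_sign_at_mult[OF order_sign_at_Gamma_numerator[of q n]
          order_sign_at_inverse[OF order_sign_at_Gamma_denominator[OF n \<open>1 \<le> \<alpha>\<close>]]]] n
    by (simp add: J_def N_def add.assoc)
qed

lemma minus_one_power_staircase_tail:
  fixes l :: "nat \<Rightarrow> nat"
  assumes head: "\<forall>j\<in>{1..q}. \<alpha> \<le> l j" and tail: "\<forall>j\<in>{q+1..n}. l j = n - j" and "q \<le> n"
  shows "(-1::real) ^ ((\<Sum>j=1..n. l j) + (\<Sum>j=1..q. l j - \<alpha>)) = (-1) ^ (q * \<alpha> + (\<Sum>j=q+1..n. n - j))"
proof -
  obtain m where n: "n = q + m"
    using assms(3) le_Suc_ex by blast
  have "(\<Sum>j=1..n. l j) = (\<Sum>j=1..q. l j) + (\<Sum>j=q+1..n. l j)"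
    unfolding n by (rule sum.ub_add_nat) simp
  also have "(\<Sum>j=q+1..n. l j) = (\<Sum>j=q+1..n. n - j)"
    using tail by simp
  finally have split: "(\<Sum>j=1..n. l j) = (\<Sum>j=1..q. l j) + (\<Sum>j=q+1..n. n - j)" .
  have "(\<Sum>j=1..q. l j) + (\<Sum>j=1..q. l j - \<alpha>) = (\<Sum>j=1..q. \<alpha> + 2 * (l j - \<alpha>))"
    unfolding sum.distrib [symmetric]
  proof (rule sum.cong)
    fix j assume "j \<in> {1..q}"
    with head have "\<alpha> \<le> l j" ..
    then show "l j + (l j - \<alpha>) = \<alpha> + 2 * (l j - \<alpha>)"
      by simp
  qed simp
  also have "\<dots> = q * \<alpha> + 2 * (\<Sum>j=1..q. l j - \<alpha>)"
    by (simp add: sum.distrib sum_distrib_left)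
  finally show ?thesis
    unfolding split by (simp add: power_add power_mult algebra_simps)
qed

lemma coeff_c_at_nonpos_int:
  assumes adm: "admissible n l" and n: "n = q + \<alpha>" and "1 \<le> \<alpha>"
  defines "s \<equiv> (-1::real) ^ (n * (n - 1) div 2 + q + q * \<alpha> + (\<Sum>j=q+1..n. n - j))"
  shows "holomorphic_at_removable (coeff_c n l) (- of_nat q)"
    and "value_at (coeff_c n l) (- of_nat q) \<noteq> 0 \<longleftrightarrow> (\<forall>j\<in>{q+1..n}. l j = n - j)"
    and "value_at (coeff_c n l) (- of_nat q) \<noteq> 0 \<Longrightarrow>
           \<exists>x>0. value_at (coeff_c n l) (- of_nat q) = complex_of_real (s * x)"
proof -
  define J where "J = {j\<in>{1..n}. \<alpha> \<le> l j}"
  have order: "order_sign_at (coeff_c n l) (- of_nat q)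
      (int (card J) - int q) (n * (n - 1) div 2 + (\<Sum>j=1..n. l j) + q + (\<Sum>j\<in>J. l j - \<alpha>))"
    unfolding J_def by (rule order_sign_at_coeff_c[OF adm n \<open>1 \<le> \<alpha>\<close>])
  have head: "{1..q} \<subseteq> J"
    unfolding J_def by (rule admissible_initial_segment_large[OF adm n])
  then have "q \<le> card J"
    using card_mono[of J "{1..q}"] by (simp add: J_def)
  then have nonneg: "int (card J) - int q \<ge> 0"
    by simp
  have order_zero_iff: "int (card J) - int q = 0 \<longleftrightarrow> J = {1..q}"
    using head card_subset_eq[of J "{1..q}"] by (auto simp: J_def)
  have large_iff: "J = {1..q} \<longleftrightarrow> (\<forall>j\<in>{q+1..n}. l j = n - j)"
    unfolding J_def by (rule admissible_large_eq_initial_iff[OF adm n \<open>1 \<le> \<alpha>\<close>])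
  show "holomorphic_at_removable (coeff_c n l) (- of_nat q)"
    using order_sign_at_nonneg(1)[OF order nonneg] .
  show "value_at (coeff_c n l) (- of_nat q) \<noteq> 0 \<longleftrightarrow> (\<forall>j\<in>{q+1..n}. l j = n - j)"
    using order_sign_at_nonneg(2)[OF order nonneg] order_zero_iff large_iff by simp
  assume "value_at (coeff_c n l) (- of_nat q) \<noteq> 0"
  then have order_zero: "int (card J) - int q = 0"
    using order_sign_at_nonneg(2)[OF order nonneg] by simp
  then have large: "J = {1..q}" and tail: "\<forall>j\<in>{q+1..n}. l j = n - j"
    using order_zero_iff large_iff by simp_all
  obtain x where "x > 0" and x: "value_at (coeff_c n l) (- of_nat q) =
      complex_of_real ((-1) ^ (n * (n - 1) div 2 + (\<Sum>j=1..n. l j) + q + (\<Sum>j\<in>J. l j - \<alpha>)) * x)"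
    using order_sign_at_nonneg(3)[OF order nonneg order_zero] by blast
  have "\<forall>j\<in>{1..q}. \<alpha> \<le> l j"
    using head by (auto simp: J_def)
  from minus_one_power_staircase_tail[OF this tail] n
  have "(-1::real) ^ (n * (n - 1) div 2 + (\<Sum>j=1..n. l j) + q + (\<Sum>j\<in>J. l j - \<alpha>)) = s"
    by (simp add: large s_def power_add)
  with \<open>x > 0\<close> x show "\<exists>x>0. value_at (coeff_c n l) (- of_nat q) = complex_of_real (s * x)"
    by auto
qed

theorem mainTheorem10:
  fixes n \<alpha> :: nat
  assumes "1 \<le> n" and "1 \<le> \<alpha>" and "\<alpha> \<le> n"
  defines "z0 \<equiv> complex_of_int (int \<alpha> - int n)"
  shows "(\<forall>l. admissible n l \<longrightarrow> holomorphic_at_removable (coeff_c n l) z0)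
       \<and> (\<forall>l. admissible n l \<longrightarrow>
            (value_at (coeff_c n l) z0 \<noteq> 0 \<longleftrightarrow> (\<forall>j\<in>{n - \<alpha> + 1..n}. l j = n - j)))
       \<and> (\<exists>s::real. (s = 1 \<or> s = -1) \<and>
            (\<forall>l. admissible n l \<longrightarrow> value_at (coeff_c n l) z0 \<noteq> 0 \<longrightarrow>
               (\<exists>x::real. x > 0 \<and> value_at (coeff_c n l) z0 = complex_of_real (s * x))))"
proof -
  define q where "q = n - \<alpha>"
  have n: "n = q + \<alpha>"
    using assms(3) by (simp add: q_def)
  have z0: "z0 = - of_nat q" and tail_start: "n - \<alpha> + 1 = q + 1"
    using n by (simp_all add: z0_def q_def)
  define s where "s = (-1::real) ^ (n * (n - 1) div 2 + q + q * \<alpha> + (\<Sum>j=q+1..n. n - j))"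
  have "s = 1 \<or> s = -1"
    by (simp add: s_def minus_one_power_iff)
  then show ?thesis
    unfolding z0 tail_start
    using coeff_c_at_nonpos_int[OF _ n assms(2), folded s_def] by blast
qed

end
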